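(* Let $n\geq 1$, $m=\frac{n^2+n}{2}$, and let $z:\mathbb{R}^n\to\mathbb{R}^m$ be the map $z(x)=\begin{bmatrix}x_1^2 & x_1x_2 & \cdots & x_1x_n & x_2^2 & x_2x_3 & \cdots & x_n^2\end{bmatrix}^\top$ listing all quadratic monomials of $x$; write $w=z(x)$ and $w_\ell$ for its $\ell$-th entry. Let $E=E^\top\in\mathbb{R}^{n\times n}$ be positive definite, $\alpha>0$, and $\mathcal{E}_\alpha=\{x : x^\top E x\leq\alpha^2\}$. Let $p,q\in\{1,\dots,m\}$ be indices such that $w_pw_q=x_i^2x_jx_k$ (as polynomials in $x$) for some $i,j,k\in\{1,\dots,n\}$ with $j\neq k$. Let $S_{pq}=\bar e_p\bar e_q^\top+\bar e_q\bar e_p^\top\in\mathbb{R}^{m\times m}$. Then the following four quadratic constraints hold for all $x\in\mathcal{E}_\alpha$ with $w=z(x)$: (i) with $d=e_j+e_k$ and $W$ equal to either $(e_i^\top E^{-1}e_i)\,dd^\top$ or $(d^\top E^{-1}d)\,e_ie_i^\top$, $$\begin{bmatrix} x\\ w\end{bmatrix}^\top\begin{bmatrix}\alpha^2 W & 0\\ 0 & -S_{pq}\end{bmatrix}\begin{bmatrix} x\\ w\end{bmatrix}\geq 0;$$ (ii) with $d=e_j-e_k$ and $W$ equal to either $(e_i^\top E^{-1}e_i)\,dd^\top$ or $(d^\top E^{-1}d)\,e_ie_i^\top$, $$\begin{bmatrix} x\\ w\end{bmatrix}^\top\begin{bmatrix}\alpha^2 W & 0\\ 0 & S_{pq}\end{bmatrix}\begin{bmatrix}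 x\\ w\end{bmatrix}\geq 0.$$
   Context: $e_1,\dots,e_n$ denote the standard basis vectors of $\mathbb{R}^n$ and $\bar e_1,\dots,\bar e_m$ the standard basis vectors of $\mathbb{R}^m$. The index $i$ may coincide with $j$ or $k$. *)

theory Defs
  imports "Jordan_Normal_Form.Matrix"
begin

definition pos_def_mat :: "nat \<Rightarrow> real mat \<Rightarrow> bool" where
  "pos_def_mat n E \<longleftrightarrow> E \<in> carrier_mat n n \<and> transpose_mat E = E \<and>
     (\<forall>v \<in> carrier_vec n. v \<noteq> 0\<^sub>v n \<longrightarrow> v \<bullet> (E *\<^sub>v v) > 0)"

(* z(x): all quadratic monomials x_a x_b with a <= b, in the order
   x_1^2, x_1 x_2, ..., x_1 x_n, x_2^2, x_2 x_3, ..., x_n^2 (0-based indices here). *)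
definition zmap :: "real vec \<Rightarrow> real vec" where
  "zmap x = vec_of_list (concat (map (\<lambda>a. map (\<lambda>b. x $ a * x $ b) [a..<dim_vec x]) [0..<dim_vec x]))"

definition outer :: "real vec \<Rightarrow> real vec \<Rightarrow> real mat" where
  "outer u v = mat_of_cols (dim_vec u) [u] * mat_of_rows (dim_vec v) [v]"

definition Smat :: "nat \<Rightarrow> nat \<Rightarrow> nat \<Rightarrow> real mat" where
  "Smat m p q = outer (unit_vec m p) (unit_vec m q) + outer (unit_vec m q) (unit_vec m p)"

definition blockQF :: "real mat \<Rightarrow> real mat \<Rightarrow> real vec \<Rightarrow> real vec \<Rightarrow> real" where
  "blockQF A B x w = (x @\<^sub>v w) \<bullet>
     (four_block_mat A (0\<^sub>m (dim_vec x) (dim_vec w)) (0\<^sub>m (dim_vec w) (dim_vec x)) B *\<^sub>v (x @\<^sub>v w))"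

end

theory Submission
  imports Defs
begin

(* For x in the ellipsoid, Cauchy-Schwarz for the inner product defined by E gives
   (d . x)^2 <= alpha^2 d^T E^-1 d for every d. Each block form equals
   alpha^2 c (d . x)^2 -/+ 2 w_p w_q with 2 w_p w_q = 2 x_i^2 x_j x_k, and
   +/-2 x_j x_k <= (x_j +/- x_k)^2 shows that this term is dominated by x_i^2 (x_j +/- x_k)^2.
   Bounding either factor of that product by the ellipsoid estimate yields the four constraints. *)

lemma outer_carrier_mat [simp]:
  "u \<in> carrier_vec n1 \<Longrightarrow> v \<in> carrier_vec n2 \<Longrightarrow> outer u v \<in> carrier_mat n1 n2"
  unfolding outer_def by auto

lemma outer_mult_vec:
  assumes "u \<in> carrier_vec n1" "v \<in> carrier_vec n2" "x \<in> carrier_vec n2"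
  shows "outer u v *\<^sub>v x = (v \<bullet> x) \<cdot>\<^sub>v u"
proof -
  have "outer u v *\<^sub>v x = mat_of_cols n1 [u] *\<^sub>v (mat_of_rows n2 [v] *\<^sub>v x)"
    unfolding outer_def using assms by (subst assoc_mult_mat_vec[of _ n1 1 _ n2]) auto
  also have "\<dots> = (v \<bullet> x) \<cdot>\<^sub>v u"
    using assms
    by (intro eq_vecI) (auto simp: mult_mat_vec_def scalar_prod_def mat_of_cols_def mat_of_rows_def)
  finally show ?thesis .
qed

lemma quadratic_form_outer:
  assumes "u \<in> carrier_vec n" "v \<in> carrier_vec n" "x \<in> carrier_vec n"
  shows "x \<bullet> (outer u v *\<^sub>v x) = (u \<bullet> x) * (v \<bullet> x)"
  using assms by (simp add: outer_mult_vec comm_scalar_prod[of x n u])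

lemma quadratic_form_smult:
  fixes A :: "real mat"
  assumes "A \<in> carrier_mat n n" "x \<in> carrier_vec n"
  shows "x \<bullet> ((c \<cdot>\<^sub>m A) *\<^sub>v x) = c * (x \<bullet> (A *\<^sub>v x))"
proof -
  have "(c \<cdot>\<^sub>m A) *\<^sub>v x = c \<cdot>\<^sub>v (A *\<^sub>v x)"
    using assms by (intro eq_vecI) auto
  then show ?thesis using assms by simp
qed

lemma quadratic_form_Smat:
  assumes "w \<in> carrier_vec m" "p < m" "q < m"
  shows "w \<bullet> (Smat m p q *\<^sub>v w) = 2 * (w $ p * w $ q)"
proof -
  have "Smat m p q *\<^sub>v w = w $ q \<cdot>\<^sub>v unit_vec m p + w $ p \<cdot>\<^sub>v unit_vec m q"
    using assms unfolding Smat_def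
    by (simp add: add_mult_distrib_mat_vec[of _ m m] outer_mult_vec[of _ m _ m])
  then show ?thesis
    using assms by (simp add: scalar_prod_add_distrib[of _ m])
qed

lemma blockQF_eq:
  assumes "A \<in> carrier_mat n n" "B \<in> carrier_mat m m" "x \<in> carrier_vec n" "w \<in> carrier_vec m"
  shows "blockQF A B x w = x \<bullet> (A *\<^sub>v x) + w \<bullet> (B *\<^sub>v w)"
  using assms unfolding blockQF_def
  by (simp add: mult_mat_vec_split scalar_prod_append[of _ n _ m])

lemma blockQF_rank_one_Smat:
  assumes "d \<in> carrier_vec n" "x \<in> carrier_vec n" "w \<in> carrier_vec m" "p < m" "q < m"
  shows "blockQF (a \<cdot>\<^sub>m (c \<cdot>\<^sub>m outer d d)) (Smat m p q) x w = a * c * (d \<bullet> x)^2 + 2 * (w $ p * w $ q)"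
    and "blockQF (a \<cdot>\<^sub>m (c \<cdot>\<^sub>m outer d d)) (- Smat m p q) x w = a * c * (d \<bullet> x)^2 - 2 * (w $ p * w $ q)"
proof -
  have W: "a \<cdot>\<^sub>m (c \<cdot>\<^sub>m outer d d) \<in> carrier_mat n n"
    using assms(1) by simp
  have S: "Smat m p q \<in> carrier_mat m m"
    unfolding Smat_def by (intro add_carrier_mat outer_carrier_mat unit_vec_carrier)
  have "x \<bullet> ((a \<cdot>\<^sub>m (c \<cdot>\<^sub>m outer d d)) *\<^sub>v x) = a * c * (d \<bullet> x)^2"
    using assms(1,2)
    by (simp add: quadratic_form_smult[of _ n] quadratic_form_outer[of _ n] power2_eq_square)
  moreover have "w \<bullet> ((- Smat m p q) *\<^sub>v w) = - (w \<bullet> (Smat m p q *\<^sub>v w))"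
    using S assms(3) by simp
  ultimately show "blockQF (a \<cdot>\<^sub>m (c \<cdot>\<^sub>m outer d d)) (Smat m p q) x w = a * c * (d \<bullet> x)^2 + 2 * (w $ p * w $ q)"
    and "blockQF (a \<cdot>\<^sub>m (c \<cdot>\<^sub>m outer d d)) (- Smat m p q) x w = a * c * (d \<bullet> x)^2 - 2 * (w $ p * w $ q)"
    using blockQF_eq[OF W S assms(2,3)] blockQF_eq[OF W uminus_carrier_mat[OF S] assms(2,3)]
      quadratic_form_Smat[OF assms(3-5)] by simp_all
qed

lemma sum_lessThan_diff_nat: "(\<Sum>a<n. n - a) = n * Suc n div 2"
proof -
  have "(\<Sum>a<n. n - a) = (\<Sum>a<Suc n. Suc n - Suc a)"
    by simp
  also have "\<dots> = (\<Sum>a<Suc n. a)"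
    by (rule sum.nat_diff_reindex)
  also have "\<dots> = n * Suc n div 2"
    unfolding lessThan_Suc_atMost atLeast0AtMost[symmetric] by (rule gauss_sum_nat)
  finally show ?thesis .
qed

lemma dim_zmap: "dim_vec (zmap x) = (dim_vec x ^ 2 + dim_vec x) div 2"
proof -
  have "dim_vec (zmap x) = (\<Sum>a<dim_vec x. dim_vec x - a)"
    unfolding zmap_def
    by (simp add: length_concat o_def atLeast0LessThan flip: sum_set_upt_conv_sum_list_nat)
  then show ?thesis by (simp add: sum_lessThan_diff_nat power2_eq_square)
qed

lemma pos_def_mat_quadratic_form_nonneg:
  assumes "pos_def_mat n E" "v \<in> carrier_vec n"
  shows "0 \<le> v \<bullet> (E *\<^sub>v v)"
  using assms unfolding pos_def_mat_def
  by (cases "v = 0\<^sub>v n") (auto intro: less_imp_le)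

lemma pos_def_mat_bilinear_commute:
  assumes "pos_def_mat n E" "u \<in> carrier_vec n" "v \<in> carrier_vec n"
  shows "u \<bullet> (E *\<^sub>v v) = v \<bullet> (E *\<^sub>v u)"
proof -
  have E: "E \<in> carrier_mat n n" and "transpose_mat E = E"
    using assms(1) unfolding pos_def_mat_def by auto
  then have "u \<bullet> (E *\<^sub>v v) = (E *\<^sub>v u) \<bullet> v"
    using transpose_vec_mult_scalar[OF E assms(3,2)] by simp
  then show ?thesis
    using E assms(2,3) by (simp add: comm_scalar_prod[of _ n v])
qed

lemma right_inverse_quadratic_form:
  fixes E Einv :: "real mat"
  assumes "E \<in> carrier_mat n n" "Einv \<in> carrier_mat n n" "E * Einv = 1\<^sub>m n"
    and "u \<in> carrier_vec n"
  shows "u \<bullet> (Einv *\<^sub>v u) = (Einv *\<^sub>v u) \<bullet> (E *\<^sub>v (Einv *\<^sub>v u))"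
proof -
  have "E *\<^sub>v (Einv *\<^sub>v u) = u"
    using assms by (simp flip: assoc_mult_mat_vec)
  then show ?thesis
    using assms by (simp add: comm_scalar_prod[of _ n u])
qed

lemma pos_def_mat_inverse_quadratic_form_nonneg:
  assumes "pos_def_mat n E" "Einv \<in> carrier_mat n n" "E * Einv = 1\<^sub>m n" "u \<in> carrier_vec n"
  shows "0 \<le> u \<bullet> (Einv *\<^sub>v u)"
  using assms right_inverse_quadratic_form[of E n Einv u] pos_def_mat_quadratic_form_nonneg[of n E]
  unfolding pos_def_mat_def by auto

lemma pos_def_mat_cauchy_schwarz:
  assumes E: "pos_def_mat n E" and Einv: "Einv \<in> carrier_mat n n" "E * Einv = 1\<^sub>m n"
    and u: "u \<in> carrier_vec n" and x: "x \<in> carrier_vec n"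
  shows "(u \<bullet> x)^2 \<le> (u \<bullet> (Einv *\<^sub>v u)) * (x \<bullet> (E *\<^sub>v x))"
proof -
  have En: "E \<in> carrier_mat n n" using E unfolding pos_def_mat_def by auto
  define y where "y = Einv *\<^sub>v u"
  have y: "y \<in> carrier_vec n" using Einv u unfolding y_def by simp
  have Ey: "E *\<^sub>v y = u"
    using En Einv u unfolding y_def by (simp flip: assoc_mult_mat_vec)
  define a b c where "a = x \<bullet> (E *\<^sub>v x)" and "b = u \<bullet> x" and "c = u \<bullet> (Einv *\<^sub>v u)"
  have c: "c = y \<bullet> (E *\<^sub>v y)"
    using right_inverse_quadratic_form[OF En Einv u] unfolding c_def y_def .
  have yx: "y \<bullet> (E *\<^sub>v x) = b"
    using pos_def_mat_bilinear_commute[OF E y x] Ey x u unfolding b_def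
    by (simp add: comm_scalar_prod[of _ n u])
  (* positivity of E at c x - b y: the discriminant argument without dividing by c *)
  have "0 \<le> (c \<cdot>\<^sub>v x - b \<cdot>\<^sub>v y) \<bullet> (E *\<^sub>v (c \<cdot>\<^sub>v x - b \<cdot>\<^sub>v y))"
    using E x y by (intro pos_def_mat_quadratic_form_nonneg) auto
  also have "\<dots> = c * (c * a - b^2)"
    using En x y yx pos_def_mat_bilinear_commute[OF E x y] unfolding a_def c
    by (simp add: mult_minus_distrib_mat_vec[of _ n n] mult_mat_vec[of _ n n] minus_scalar_prod_distrib[of _ n]
        scalar_prod_minus_distrib[of _ n] algebra_simps power2_eq_square)
  finally have "0 \<le> c * (c * a - b^2)" .
  moreover have "c > 0 \<or> b = 0"
  proof (cases "y = 0\<^sub>v n")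
    case True
    then have "u = 0\<^sub>v n" using Ey En by auto
    then show ?thesis using x unfolding b_def by simp
  next
    case False
    then show ?thesis using E y unfolding c pos_def_mat_def by auto
  qed
  moreover have "0 \<le> c" "0 \<le> a"
    using pos_def_mat_quadratic_form_nonneg[OF E] x y unfolding a_def c by auto
  ultimately have "b^2 \<le> c * a"
    by (auto simp: zero_le_mult_iff)
  then show ?thesis unfolding a_def b_def c_def .
qed

lemma ellipsoid_scalar_prod_bound:
  assumes E: "pos_def_mat n E" and Einv: "Einv \<in> carrier_mat n n" "E * Einv = 1\<^sub>m n"
    and u: "u \<in> carrier_vec n" and x: "x \<in> carrier_vec n" and ell: "x \<bullet> (E *\<^sub>v x) \<le> \<alpha>^2"
  shows "(u \<bullet> x)^2 \<le> \<alpha>^2 * (u \<bullet> (Einv *\<^sub>v u))"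
proof -
  have "(u \<bullet> x)^2 \<le> (u \<bullet> (Einv *\<^sub>v u)) * (x \<bullet> (E *\<^sub>v x))"
    by (rule pos_def_mat_cauchy_schwarz[OF assms(1-5)])
  also have "\<dots> \<le> (u \<bullet> (Einv *\<^sub>v u)) * \<alpha>^2"
    using ell pos_def_mat_inverse_quadratic_form_nonneg[OF E Einv u] by (rule mult_left_mono)
  finally show ?thesis by (simp only: mult.commute)
qed

lemma square_mult_le_bounds:
  fixes a s t A B :: real
  assumes "a^2 \<le> A" "s^2 \<le> B" "2 * t \<le> s^2"
  shows "2 * (a^2 * t) \<le> A * s^2" "2 * (a^2 * t) \<le> B * a^2"
proof -
  have "2 * (a^2 * t) \<le> a^2 * s^2"
    using mult_left_mono[OF assms(3), of "a^2"] by simp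
  then show "2 * (a^2 * t) \<le> A * s^2" "2 * (a^2 * t) \<le> B * a^2"
    using mult_right_mono[OF assms(1), of "s^2"] mult_left_mono[OF assms(2), of "a^2"]
    by (simp_all add: mult.commute)
qed

theorem theorem4:
  fixes n m p q i j k :: nat and E Einv :: "real mat" and \<alpha> :: real
  assumes "n \<ge> 1"
    and "m = (n^2 + n) div 2"
    and "pos_def_mat n E"
    and "Einv \<in> carrier_mat n n" and "E * Einv = 1\<^sub>m n"
    and "\<alpha> > 0"
    and "p < m" and "q < m"
    and "i < n" and "j < n" and "k < n" and "j \<noteq> k"
    and "\<forall>y \<in> carrier_vec n. zmap y $ p * zmap y $ q = (y $ i)^2 * y $ j * y $ k"
  shows "\<forall>x \<in> carrier_vec n. x \<bullet> (E *\<^sub>v x) \<le> \<alpha>^2 \<longrightarrow>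
    (let w = zmap x; ei = unit_vec n i;
         dp = unit_vec n j + unit_vec n k; dm = unit_vec n j - unit_vec n k;
         S = Smat m p q in
      blockQF (\<alpha>^2 \<cdot>\<^sub>m ((ei \<bullet> (Einv *\<^sub>v ei)) \<cdot>\<^sub>m outer dp dp)) (- S) x w \<ge> 0 \<and>
      blockQF (\<alpha>^2 \<cdot>\<^sub>m ((dp \<bullet> (Einv *\<^sub>v dp)) \<cdot>\<^sub>m outer ei ei)) (- S) x w \<ge> 0 \<and>
      blockQF (\<alpha>^2 \<cdot>\<^sub>m ((ei \<bullet> (Einv *\<^sub>v ei)) \<cdot>\<^sub>m outer dm dm)) S x w \<ge> 0 \<and>
      blockQF (\<alpha>^2 \<cdot>\<^sub>m ((dm \<bullet> (Einv *\<^sub>v dm)) \<cdot>\<^sub>m outer ei ei)) S x w \<ge> 0)"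
proof (intro ballI impI, unfold Let_def)
  fix x :: "real vec"
  assume x: "x \<in> carrier_vec n" and ell: "x \<bullet> (E *\<^sub>v x) \<le> \<alpha>^2"
  let ?ei = "unit_vec n i" and ?dp = "unit_vec n j + unit_vec n k" and ?dm = "unit_vec n j - unit_vec n k"
  have w: "zmap x \<in> carrier_vec m"
    using x assms(2) dim_zmap[of x] by (intro carrier_vecI) simp
  have "(d \<bullet> x)^2 \<le> \<alpha>^2 * (d \<bullet> (Einv *\<^sub>v d))" if "d \<in> carrier_vec n" for d
    using ellipsoid_scalar_prod_bound[OF assms(3-5) that x ell] .
  then have ei: "(?ei \<bullet> x)^2 \<le> \<alpha>^2 * (?ei \<bullet> (Einv *\<^sub>v ?ei))"
    and dp: "(?dp \<bullet> x)^2 \<le> \<alpha>^2 * (?dp \<bullet> (Einv *\<^sub>v ?dp))"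
    and dm: "(?dm \<bullet> x)^2 \<le> \<alpha>^2 * (?dm \<bullet> (Einv *\<^sub>v ?dm))"
    by simp_all
  have "?ei \<bullet> x = x $ i" "?dp \<bullet> x = x $ j + x $ k" "?dm \<bullet> x = x $ j - x $ k"
    using x assms(9-11) by (simp_all add: add_scalar_prod_distrib[of _ n] minus_scalar_prod_distrib[of _ n])
  then have sp: "2 * (x $ j * x $ k) \<le> (?dp \<bullet> x)^2" and sm: "2 * - (x $ j * x $ k) \<le> (?dm \<bullet> x)^2"
    and "zmap x $ p * zmap x $ q = (?ei \<bullet> x)^2 * (x $ j * x $ k)"
    using sum_power2_ge_zero[of "x $ j" "x $ k"] assms(13) x
    by (simp_all add: power2_sum power2_diff mult.assoc)
  then have "2 * (zmap x $ p * zmap x $ q) \<le> \<alpha>^2 * (?ei \<bullet> (Einv *\<^sub>v ?ei)) * (?dp \<bullet> x)^2"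
    "2 * (zmap x $ p * zmap x $ q) \<le> \<alpha>^2 * (?dp \<bullet> (Einv *\<^sub>v ?dp)) * (?ei \<bullet> x)^2"
    "- 2 * (zmap x $ p * zmap x $ q) \<le> \<alpha>^2 * (?ei \<bullet> (Einv *\<^sub>v ?ei)) * (?dm \<bullet> x)^2"
    "- 2 * (zmap x $ p * zmap x $ q) \<le> \<alpha>^2 * (?dm \<bullet> (Einv *\<^sub>v ?dm)) * (?ei \<bullet> x)^2"
    using square_mult_le_bounds[OF ei dp sp] square_mult_le_bounds[OF ei dm sm] by (simp_all add: mult.assoc)
  then show "0 \<le> blockQF (\<alpha>^2 \<cdot>\<^sub>m ((?ei \<bullet> (Einv *\<^sub>v ?ei)) \<cdot>\<^sub>m outer ?dp ?dp)) (- Smat m p q) x (zmap x) \<and>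
      0 \<le> blockQF (\<alpha>^2 \<cdot>\<^sub>m ((?dp \<bullet> (Einv *\<^sub>v ?dp)) \<cdot>\<^sub>m outer ?ei ?ei)) (- Smat m p q) x (zmap x) \<and>
      0 \<le> blockQF (\<alpha>^2 \<cdot>\<^sub>m ((?ei \<bullet> (Einv *\<^sub>v ?ei)) \<cdot>\<^sub>m outer ?dm ?dm)) (Smat m p q) x (zmap x) \<and>
      0 \<le> blockQF (\<alpha>^2 \<cdot>\<^sub>m ((?dm \<bullet> (Einv *\<^sub>v ?dm)) \<cdot>\<^sub>m outer ?ei ?ei)) (Smat m p q) x (zmap x)"
    using blockQF_rank_one_Smat[OF _ x w assms(7,8)] by simp
qed

end
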